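(* Let $\mathcal{A}=\{A_1,\dots,A_m\}$ be a bimodal collection of pairwise disjoint nonempty subsets of a finite abelian group $G$, with internal difference groups $H_1,\dots,H_m$, such that $|A_1|<|H_1|$ and $|A_i|=|H_i|$ for all $2\le i\le m$. Let $D=H_2+H_3+\dots+H_m$, and suppose $\mathcal{A}$ is in canonical position, i.e. $A_1\subseteq H_1$ and $D\subseteq H_1\setminus A_1$. Then: (1) $A_1\subseteq H_1\setminus D$ and $A_1$ is a union of cosets of $D$; (2) each $A_i$ with $2\le i\le m$ is a coset of $H_i$, and $A_2,\dots,A_m$ arise from a subdivision of cosets of $H_1$, i.e. $A_2\cup\dots\cup A_m$ is a union of cosets of $H_1$ and each $A_i$ ($i\ge2$) is contained in a single coset of $H_1$.
   Context: $G$ is written additively. The internal difference group $H_i$ of $A_i$ is the subgroup generated by all $x-y$ with $x,y\in A_i$; $A_i$ lies in a single coset of $H_i$ and $|A_i|\le|H_i|$. A collection $\{A_1,\dots,A_m\}$ of pairwise disjoint subsets of $G$ is bimodal if for every $i$ and every $\delta\in G\setminus\{0\}$, the number $N_i(\delta)$ of pairs $(a,b)$ with $a\in A_i$, $b\in A_j$ for some $j\neq i$, and $a-b=\delta$, satisfies $N_i(\delta)\in\{0,|A_i|\}$. An empty sum of subgroups is $\{0\}$. *)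

theory Defs
  imports Main
begin

definition is_subgroup :: "'a::ab_group_add set \<Rightarrow> bool" where
  "is_subgroup H \<longleftrightarrow> 0 \<in> H \<and> (\<forall>x\<in>H. \<forall>y\<in>H. x - y \<in> H)"

definition gen_subgroup :: "'a::ab_group_add set \<Rightarrow> 'a set" where
  "gen_subgroup S = \<Inter>{H. is_subgroup H \<and> S \<subseteq> H}"

definition diff_group :: "'a::ab_group_add set \<Rightarrow> 'a set" where
  "diff_group A = gen_subgroup {x - y | x y. x \<in> A \<and> y \<in> A}"

definition subgroup_sum :: "nat set \<Rightarrow> (nat \<Rightarrow> 'a::ab_group_add set) \<Rightarrow> 'a set" where
  "subgroup_sum I H = {(\<Sum>i\<in>I. f i) | f. \<forall>i\<in>I. f i \<in> H i}"

definition coset :: "'a::ab_group_add \<Rightarrow> 'a set \<Rightarrow> 'a set" where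
  "coset x K = (\<lambda>k. x + k) ` K"

definition union_of_cosets :: "'a::ab_group_add set \<Rightarrow> 'a set \<Rightarrow> bool" where
  "union_of_cosets K S \<longleftrightarrow> (\<exists>X. S = (\<Union>x\<in>X. coset x K))"

definition Ncount :: "nat \<Rightarrow> (nat \<Rightarrow> 'a::ab_group_add set) \<Rightarrow> nat \<Rightarrow> 'a \<Rightarrow> nat" where
  "Ncount m A i \<delta> = card {(a, b). a \<in> A i \<and> (\<exists>j\<in>{1..m}. j \<noteq> i \<and> b \<in> A j) \<and> a - b = \<delta>}"

definition bimodal :: "nat \<Rightarrow> (nat \<Rightarrow> 'a::ab_group_add set) \<Rightarrow> bool" where
  "bimodal m A \<longleftrightarrow> (\<forall>i\<in>{1..m}. \<forall>\<delta>. \<delta> \<noteq> 0 \<longrightarrow>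
      Ncount m A i \<delta> = 0 \<or> Ncount m A i \<delta> = card (A i))"

end

theory Submission
  imports Defs
begin

text \<open>Write \<open>B\<^sub>i\<close> (\<open>others m A i\<close> below) for the union of the sets other than \<open>A\<^sub>i\<close>. Bimodality says that as soon as
  one element of \<open>A\<^sub>i\<close> is moved into \<open>B\<^sub>i\<close> by a translation \<open>t\<close>, all of \<open>A\<^sub>i\<close> is. The set of
  such \<open>t\<close> is therefore invariant under the differences of \<open>A\<^sub>i\<close>, hence under \<open>H\<^sub>i\<close>: so \<open>B\<^sub>i\<close> is
  a union of \<open>H\<^sub>i\<close>-cosets and misses the coset containing \<open>A\<^sub>i\<close>. For \<open>i = 1\<close> this gives part (2)
  for the union \<open>A\<^sub>2 \<union> \<dots> \<union> A\<^sub>m\<close>, which thus avoids \<open>H\<^sub>1\<close>. Each \<open>A\<^sub>i\<close> with \<open>i \<ge> 2\<close> fills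
  the coset of \<open>H\<^sub>i\<close> it lies in, so translating it by \<open>h \<in> H\<^sub>i\<close> permutes it; applied to the
  translation from \<open>A\<^sub>i\<close> to a point \<open>a \<in> A\<^sub>1\<close>, bimodality puts \<open>a + h\<close> into \<open>A\<^sub>1 \<union> B\<^sub>1\<close>,
  and as \<open>a + h \<in> H\<^sub>1\<close> it lies in \<open>A\<^sub>1\<close>. Summing, \<open>A\<^sub>1 + D = A\<^sub>1\<close>.\<close>

lemma subgroup_zero: "is_subgroup H \<Longrightarrow> 0 \<in> H"
  unfolding is_subgroup_def by blast

lemma subgroup_diff: "is_subgroup H \<Longrightarrow> x \<in> H \<Longrightarrow> y \<in> H \<Longrightarrow> x - y \<in> H"
  unfolding is_subgroup_def by blast

lemma subgroup_uminus: "is_subgroup H \<Longrightarrow> x \<in> H \<Longrightarrow> - x \<in> H"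
  using subgroup_diff[of H 0 x] subgroup_zero[of H] by simp

lemma subgroup_add: "is_subgroup H \<Longrightarrow> x \<in> H \<Longrightarrow> y \<in> H \<Longrightarrow> x + y \<in> H"
  using subgroup_diff[of H x "- y"] subgroup_uminus[of H y] by simp

lemma is_subgroup_periods: "is_subgroup {h. \<forall>t. P (t + h) = P t}"
  unfolding is_subgroup_def
proof (intro conjI ballI; simp)
  fix x y
  assume x: "\<forall>t. P (t + x) = P t" and y: "\<forall>t. P (t + y) = P t"
  show "\<forall>t. P (t + (x - y)) = P t"
    using x[rule_format, of "_ - y"] y[rule_format, of "_ - y"] by (simp add: algebra_simps)
qed

lemma is_subgroup_diff_group: "is_subgroup (diff_group A)"
  unfolding diff_group_def gen_subgroup_def is_subgroup_def by blast

lemma diff_mem_diff_group: "x \<in> A \<Longrightarrow> y \<in> A \<Longrightarrow> x - y \<in> diff_group A"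
  unfolding diff_group_def gen_subgroup_def by blast

lemma diff_group_least:
  assumes "is_subgroup K" and "\<And>x y. x \<in> A \<Longrightarrow> y \<in> A \<Longrightarrow> x - y \<in> K"
  shows "diff_group A \<subseteq> K"
  using assms unfolding diff_group_def gen_subgroup_def by blast

lemma card_coset: "finite K \<Longrightarrow> card (coset x K) = card K"
  unfolding coset_def by (simp add: card_image)

lemma subset_coset_diff_group: "c \<in> A \<Longrightarrow> A \<subseteq> coset c (diff_group A)"
  unfolding coset_def by (force intro: image_eqI[of _ _ "_ - c"] diff_mem_diff_group)

lemma eq_coset_diff_group:
  assumes "finite (diff_group A)" "c \<in> A" "card A = card (diff_group A)"
  shows "A = coset c (diff_group A)"
  using card_subset_eq[OF _ subset_coset_diff_group] card_coset assms
  by (metis finite_imageI coset_def)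

lemma union_of_cosetsI:
  assumes "0 \<in> K" and "\<And>x k. x \<in> S \<Longrightarrow> k \<in> K \<Longrightarrow> x + k \<in> S"
  shows "union_of_cosets K S"
  unfolding union_of_cosets_def coset_def using assms by (intro exI[of _ S]) force

lemma zero_mem_subgroup_sum: "\<forall>i\<in>I. 0 \<in> H i \<Longrightarrow> 0 \<in> subgroup_sum I H"
  unfolding subgroup_sum_def by (force intro: exI[of _ "\<lambda>_. 0"])

lemma subset_subgroup_sum:
  assumes "finite I" "i \<in> I" "\<forall>j\<in>I. 0 \<in> H j"
  shows "H i \<subseteq> subgroup_sum I H"
proof
  fix h assume "h \<in> H i"
  then have "\<forall>j\<in>I. (if j = i then h else 0) \<in> H j" "(\<Sum>j\<in>I. if j = i then h else 0) = h"
    using assms by auto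
  then show "h \<in> subgroup_sum I H"
    unfolding subgroup_sum_def by (intro CollectI exI[of _ "\<lambda>j. if j = i then h else 0"]) simp
qed

lemma add_subgroup_sum_closed:
  assumes "finite I" and closed: "\<And>i x h. i \<in> I \<Longrightarrow> x \<in> S \<Longrightarrow> h \<in> H i \<Longrightarrow> x + h \<in> S"
    and "x \<in> S" "d \<in> subgroup_sum I H"
  shows "x + d \<in> S"
proof -
  obtain f where f: "\<forall>i\<in>I. f i \<in> H i" and d: "d = (\<Sum>i\<in>I. f i)"
    using assms(4) unfolding subgroup_sum_def by blast
  have "\<forall>x\<in>S. x + sum f J \<in> S" if "finite J" "J \<subseteq> I" for J
    using that
  proof (induction J rule: finite_induct)
    case (insert j J)
    show ?case
    proof
      fix x assume "x \<in> S"
      then have "x + f j + sum f J \<in> S"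
        using insert closed f by blast
      then show "x + sum f (insert j J) \<in> S"
        using insert by (simp add: add.assoc)
    qed
  qed simp
  then show ?thesis
    using assms(1,3) d by blast
qed

lemma translate_into_add_diff_group:
  fixes A B :: "'a::ab_group_add set"
  assumes witness: "\<And>a x t. a \<in> A \<Longrightarrow> x \<in> A \<Longrightarrow> a + t \<in> B \<Longrightarrow> x + t \<in> B"
    and "a \<in> A" "a + t \<in> B" "h \<in> diff_group A"
  shows "a + (t + h) \<in> B"
proof -
  define P where "P t \<longleftrightarrow> (\<forall>x\<in>A. x + t \<in> B)" for t
  have shift: "P (t + (x - y))" if "P t" "x \<in> A" "y \<in> A" for t x y
  proof -
    have "x + t \<in> B"
      using that unfolding P_def by blast
    then have "y + (t + (x - y)) \<in> B"
      by (simp add: algebra_simps)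
    then show ?thesis
      using witness \<open>y \<in> A\<close> unfolding P_def by blast
  qed
  have "diff_group A \<subseteq> {h. \<forall>t. P (t + h) = P t}"
  proof (rule diff_group_least[OF is_subgroup_periods], safe)
    fix x y t
    assume "x \<in> A" "y \<in> A"
    then show "P t" if "P (t + (x - y))"
      using shift[OF that, of y x] by simp
    show "P (t + (x - y))" if "P t"
      using shift[OF that] \<open>x \<in> A\<close> \<open>y \<in> A\<close> .
  qed
  moreover have "P t"
    using witness assms(2,3) unfolding P_def by blast
  ultimately show ?thesis
    using assms(2,4) unfolding P_def by blast
qed

definition others :: "nat \<Rightarrow> (nat \<Rightarrow> 'a set) \<Rightarrow> nat \<Rightarrow> 'a set" where
  "others m A i = (\<Union>j\<in>{1..m} - {i}. A j)"

lemma Ncount_eq_card_others: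
  "Ncount m A i \<delta> = card {a \<in> A i. a - \<delta> \<in> others m A i}"
proof -
  let ?S = "{a \<in> A i. a - \<delta> \<in> others m A i}"
  have "{(a, b). a \<in> A i \<and> (\<exists>j\<in>{1..m}. j \<noteq> i \<and> b \<in> A j) \<and> a - b = \<delta>}
      = (\<lambda>a. (a, a - \<delta>)) ` ?S"
    unfolding others_def by (auto simp: algebra_simps image_iff simp del: atLeastAtMost_iff)
  moreover have "inj_on (\<lambda>a. (a, a - \<delta>)) ?S"
    by (auto simp: inj_on_def)
  ultimately show ?thesis
    unfolding Ncount_def by (simp add: card_image)
qed

lemma bimodal_translate_into_others:
  fixes A :: "nat \<Rightarrow> 'a::ab_group_add set"
  assumes "bimodal m A" "i \<in> {1..m}" "finite (A i)" "A i \<inter> others m A i = {}"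
    and "a \<in> A i" "a + t \<in> others m A i" "x \<in> A i"
  shows "x + t \<in> others m A i"
proof -
  let ?S = "{a \<in> A i. a - (- t) \<in> others m A i}"
  have "- t \<noteq> 0"
    using assms(4-6) by auto
  then have "card ?S = 0 \<or> card ?S = card (A i)"
    using assms(1,2) unfolding bimodal_def Ncount_eq_card_others by blast
  moreover have "card ?S \<noteq> 0"
    using assms(3,5,6) by (auto simp: card_eq_0_iff)
  ultimately have "?S = A i"
    using card_subset_eq[OF assms(3), of ?S] by auto
  then show ?thesis
    using assms(7) by auto
qed

lemma bimodal_others_add_diff_group:
  fixes A :: "nat \<Rightarrow> 'a::ab_group_add set"
  assumes "bimodal m A" "i \<in> {1..m}" "finite (A i)" "A i \<inter> others m A i = {}"
    and "a \<in> A i" "b \<in> others m A i" "h \<in> diff_group (A i)"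
  shows "b + h \<in> others m A i"
proof -
  have "a + ((b - a) + h) \<in> others m A i"
    using translate_into_add_diff_group[of "A i" "others m A i" a "b - a" h,
        OF bimodal_translate_into_others[OF assms(1-4)]]
      assms(5-7) by simp
  then show ?thesis
    by (simp add: algebra_simps)
qed

lemma bimodal_others_disjoint_coset:
  fixes A :: "nat \<Rightarrow> 'a::ab_group_add set"
  assumes "bimodal m A" "i \<in> {1..m}" "finite (A i)" "A i \<inter> others m A i = {}"
    and "a \<in> A i" "b \<in> others m A i"
  shows "b - a \<notin> diff_group (A i)"
proof
  assume "b - a \<in> diff_group (A i)"
  then have "a - b \<in> diff_group (A i)"
    using subgroup_uminus[OF is_subgroup_diff_group] by fastforce
  then have "b + (a - b) \<in> others m A i"
    using bimodal_others_add_diff_group[OF assms] by blast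
  then show False
    using assms(4,5) by auto
qed

locale canonical_bimodal =
  fixes m :: nat and A H :: "nat \<Rightarrow> 'a::{finite, ab_group_add} set" and D :: "'a set"
  assumes m1: "m \<ge> 1"
    and nonempty: "\<forall>i\<in>{1..m}. A i \<noteq> {}"
    and disjoint: "\<forall>i\<in>{1..m}. \<forall>j\<in>{1..m}. i \<noteq> j \<longrightarrow> A i \<inter> A j = {}"
    and bim: "bimodal m A"
    and Hdef: "\<forall>i\<in>{1..m}. H i = diff_group (A i)"
    and cardi: "\<forall>i\<in>{2..m}. card (A i) = card (H i)"
    and Ddef: "D = subgroup_sum {2..m} H"
    and canon1: "A 1 \<subseteq> H 1"
    and canon2: "D \<subseteq> H 1 - A 1"
begin

lemma one_mem: "1 \<in> {1..m}"
  using m1 by simp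

lemma subgroup_H: "i \<in> {1..m} \<Longrightarrow> is_subgroup (H i)"
  using Hdef is_subgroup_diff_group by metis

lemma disjoint_others: "i \<in> {1..m} \<Longrightarrow> A i \<inter> others m A i = {}"
  using disjoint unfolding others_def by blast

lemma others_1: "others m A 1 = (\<Union>i\<in>{2..m}. A i)"
  unfolding others_def by (rule arg_cong[where f = Union]) auto

lemma A_eq_coset: "i \<in> {2..m} \<Longrightarrow> c \<in> A i \<Longrightarrow> A i = coset c (H i)"
  using eq_coset_diff_group[of "A i" c] Hdef cardi by auto

lemma zero_mem_H: "\<forall>i\<in>{2..m}. 0 \<in> H i"
proof
  fix i assume "i \<in> {2..m}"
  then have "i \<in> {1..m}"
    by simp
  then show "0 \<in> H i"
    by (rule subgroup_zero[OF subgroup_H])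
qed

lemma H_subset_D: "i \<in> {2..m} \<Longrightarrow> H i \<subseteq> D"
  unfolding Ddef using subset_subgroup_sum[OF finite_atLeastAtMost _ zero_mem_H] .

lemma H_subset_H1: "i \<in> {2..m} \<Longrightarrow> H i \<subseteq> H 1"
  using H_subset_D canon2 by blast

lemma others_1_add_H1: "b \<in> others m A 1 \<Longrightarrow> h \<in> H 1 \<Longrightarrow> b + h \<in> others m A 1"
  using bimodal_others_add_diff_group[OF bim one_mem _ disjoint_others[OF one_mem]]
    nonempty one_mem Hdef finite by blast

lemma others_1_disjoint_H1: "others m A 1 \<inter> H 1 = {}"
proof -
  have "b \<notin> H 1" if "b \<in> others m A 1" "a \<in> A 1" for a b
    using bimodal_others_disjoint_coset[OF bim one_mem _ disjoint_others[OF one_mem] that(2,1)] finite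
      subgroup_diff[OF subgroup_H[OF one_mem], of b a] canon1 Hdef one_mem that(2) by auto
  then show ?thesis
    using nonempty one_mem by blast
qed

lemma A1_add_H:
  assumes i: "i \<in> {2..m}" and a: "a \<in> A 1" and h: "h \<in> H i"
  shows "a + h \<in> A 1"
proof -
  have i': "i \<in> {1..m}" "i \<noteq> 1"
    using i by auto
  obtain c where c: "c \<in> A i"
    using nonempty i' by blast
  have "c + h \<in> A i"
    using A_eq_coset[OF i c] h unfolding coset_def by blast
  moreover have "c + (a - c) \<in> others m A i"
    using a one_mem i' unfolding others_def by auto
  ultimately have "(c + h) + (a - c) \<in> others m A i"
    using bimodal_translate_into_others[OF bim i'(1) _ disjoint_others[OF i'(1)] c] finite by blast
  then have "a + h \<in> A 1 \<union> others m A 1"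
    unfolding others_def by (auto simp: algebra_simps)
  moreover have "a + h \<in> H 1"
    using subgroup_add[OF subgroup_H[OF one_mem]] canon1 a H_subset_H1[OF i] h by blast
  ultimately show ?thesis
    using others_1_disjoint_H1 by blast
qed

lemma A1_add_D: "a \<in> A 1 \<Longrightarrow> d \<in> D \<Longrightarrow> a + d \<in> A 1"
  using add_subgroup_sum_closed[of "{2..m}" "A 1" H a d] A1_add_H Ddef by blast

lemma zero_mem_D: "0 \<in> D"
  unfolding Ddef using zero_mem_subgroup_sum[OF zero_mem_H] .

end

theorem theorem3p15:
  fixes A H :: "nat \<Rightarrow> 'a::{finite, ab_group_add} set" and m :: nat and D :: "'a set"
  assumes m1: "m \<ge> 1"
    and nonempty: "\<forall>i\<in>{1..m}. A i \<noteq> {}"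
    and disjoint: "\<forall>i\<in>{1..m}. \<forall>j\<in>{1..m}. i \<noteq> j \<longrightarrow> A i \<inter> A j = {}"
    and bim: "bimodal m A"
    and Hdef: "\<forall>i\<in>{1..m}. H i = diff_group (A i)"
    and card1: "card (A 1) < card (H 1)"
    and cardi: "\<forall>i\<in>{2..m}. card (A i) = card (H i)"
    and Ddef: "D = subgroup_sum {2..m} H"
    and canon1: "A 1 \<subseteq> H 1"
    and canon2: "D \<subseteq> H 1 - A 1"
  shows "(A 1 \<subseteq> H 1 - D \<and> union_of_cosets D (A 1)) \<and>
         (\<forall>i\<in>{2..m}. \<exists>x. A i = coset x (H i)) \<and>
         union_of_cosets (H 1) (\<Union>i\<in>{2..m}. A i) \<and>
         (\<forall>i\<in>{2..m}. \<exists>x. A i \<subseteq> coset x (H 1))"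
proof -
  interpret canonical_bimodal m A H D
    using m1 nonempty disjoint bim Hdef cardi Ddef canon1 canon2 by (rule canonical_bimodal.intro)
  have cosets: "\<exists>x. A i = coset x (H i)" "\<exists>x. A i \<subseteq> coset x (H 1)" if i: "i \<in> {2..m}" for i
  proof -
    obtain c where "c \<in> A i"
      using nonempty i by fastforce
    then show "\<exists>x. A i = coset x (H i)" "\<exists>x. A i \<subseteq> coset x (H 1)"
      using A_eq_coset[OF i] H_subset_H1[OF i] unfolding coset_def by blast+
  qed
  have "A 1 \<subseteq> H 1 - D"
    using canon1 canon2 by blast
  moreover have "union_of_cosets D (A 1)"
    using union_of_cosetsI zero_mem_D A1_add_D by blast
  moreover have "union_of_cosets (H 1) (\<Union>i\<in>{2..m}. A i)"
    using union_of_cosetsI[OF subgroup_zero[OF subgroup_H[OF one_mem]] others_1_add_H1]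
    unfolding others_1 .
  ultimately show ?thesis
    using cosets by simp
qed

end
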